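(* Let $c>2/\log e$ and let $n$ be any positive integer. If $d\in[n]$ and $m\ge c\,n\,2^{2d}$, then $\mathcal{F}\sim\mathcal{F}(m,n,d)^{\otimes 2}$ is unsatisfiable with high probability.
   Context: $\log$ denotes base-2 logarithm. $\mathcal{F}(m,n,d)$ is the distribution of random $d$-CNFs on $n$ variables obtained by sampling $m$ clauses independently and uniformly with replacement from the $\binom{n}{d}2^d$ clauses on $d$ distinct variables. For disjoint variable sets $X=\{x_1,\dots,x_n\}$ and $Y=\{y_1,\dots,y_n\}$, $\mathcal{F}(m,n,d)^{\otimes 2}$ is the distribution of $2d$-CNFs obtained by sampling $C^1_1\wedge\dots\wedge C^1_m\sim\mathcal{F}(m,n,d)$ on $X$ and independently $C^2_1\wedge\dots\wedge C^2_m\sim\mathcal{F}(m,n,d)$ on $Y$, and outputting $(C^1_1\vee C^2_1)\wedge\dots\wedge(C^1_m\vee C^2_m)$. "With high probability" means with probability tending to $1$ as $n\to\infty$. *)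

theory Defs
  imports "HOL-Probability.Probability"
begin

text \<open>A literal is a pair (variable index, polarity); variables of a formula on n
variables are indexed by 0..<n. A clause is a set of literals.\<close>

type_synonym lit = "nat \<times> bool"
type_synonym clause = "lit set"

definition dclauses :: "nat \<Rightarrow> nat \<Rightarrow> clause set" where
  "dclauses n d = {C. C \<subseteq> {..<n} \<times> UNIV \<and> card C = d \<and> inj_on fst C}"

definition lit_sat :: "(nat \<Rightarrow> bool) \<Rightarrow> lit \<Rightarrow> bool" where
  "lit_sat \<alpha> l = (\<alpha> (fst l) = snd l)"

definition clause_sat :: "(nat \<Rightarrow> bool) \<Rightarrow> clause \<Rightarrow> bool" where
  "clause_sat \<alpha> C = (\<exists>l\<in>C. lit_sat \<alpha> l)"

text \<open>A sample of F(m,n,d)^{\<otimes>2}: two independent sequences of m clauses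
(the first on X, the second on Y).\<close>
definition prod_sat :: "nat \<Rightarrow> (nat \<Rightarrow> clause) \<Rightarrow> (nat \<Rightarrow> clause) \<Rightarrow> bool" where
  "prod_sat m F1 F2 = (\<exists>\<alpha> \<beta>. \<forall>i<m. clause_sat \<alpha> (F1 i) \<or> clause_sat \<beta> (F2 i))"

text \<open>Sampling m clauses independently uniformly with replacement = uniform
distribution on sequences {0..<m} \<rightarrow> dclauses n d.\<close>
definition F_dist :: "nat \<Rightarrow> nat \<Rightarrow> nat \<Rightarrow> (nat \<Rightarrow> clause) pmf" where
  "F_dist m n d = pmf_of_set ({..<m} \<rightarrow>\<^sub>E dclauses n d)"

definition F_prod_dist :: "nat \<Rightarrow> nat \<Rightarrow> nat \<Rightarrow> ((nat \<Rightarrow> clause) \<times> (nat \<Rightarrow> clause)) pmf" where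
  "F_prod_dist m n d = pair_pmf (F_dist m n d) (F_dist m n d)"

definition prob_prod_sat :: "nat \<Rightarrow> nat \<Rightarrow> nat \<Rightarrow> real" where
  "prob_prod_sat m n d =
     measure_pmf.prob (F_prod_dist m n d) {(F1, F2). prod_sat m F1 F2}"

end

theory Submission
  imports Defs
begin

text \<open>First moment method. A fixed pair of assignments to X and Y falsifies a random
clause C1 \<or> C2 exactly when it falsifies both halves, which happens with probability
2^-d \<cdot> 2^-d = 4^-d; so it satisfies all m independent clauses with probability
(1 - 4^-d)^m \<le> exp (-m / 4^d) \<le> exp (-c n). A union bound over the 4^n assignment pairs
bounds the probability of satisfiability by (4 e^-c)^n, which tends to 0 because
c > 2 / log e = ln 4.\<close>

lemma card_PiE_pairs_pointwise:
  assumes "finite I"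
  shows "card {(f, g) \<in> (I \<rightarrow>\<^sub>E A) \<times> (I \<rightarrow>\<^sub>E B). \<forall>i\<in>I. R (f i) (g i)}
           = card {(x, y) \<in> A \<times> B. R x y} ^ card I"
proof -
  let ?K = "{(x, y) \<in> A \<times> B. R x y}"
  let ?zip = "\<lambda>(f, g). \<lambda>i\<in>I. (f i, g i)"
  let ?unzip = "\<lambda>G. (\<lambda>i\<in>I. fst (G i), \<lambda>i\<in>I. snd (G i))"
  have "bij_betw ?zip {(f, g) \<in> (I \<rightarrow>\<^sub>E A) \<times> (I \<rightarrow>\<^sub>E B). \<forall>i\<in>I. R (f i) (g i)} (I \<rightarrow>\<^sub>E ?K)"
    by (rule bij_betw_byWitness[where f' = ?unzip])
       (auto simp: PiE_def extensional_def fun_eq_iff Pi_def)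
  thus ?thesis using assms by (simp add: bij_betw_same_card card_PiE)
qed

lemma pair_pmf_of_set:
  assumes "finite A" "A \<noteq> {}" "finite B" "B \<noteq> {}"
  shows "pair_pmf (pmf_of_set A) (pmf_of_set B) = pmf_of_set (A \<times> B)"
  by (rule pmf_eqI) (auto simp: pmf_pair assms card_cartesian_product indicator_def)

lemma one_minus_power_le_exp:
  fixes x :: real
  assumes "0 \<le> x" "x \<le> 1"
  shows "(1 - x) ^ m \<le> exp (- (real m * x))"
proof -
  have "(1 - x) ^ m \<le> exp (- x) ^ m"
    using assms exp_ge_add_one_self[of "- x"] by (intro power_mono) auto
  thus ?thesis by (simp flip: exp_of_nat_mult)
qed

definition clause_on :: "nat set \<Rightarrow> (nat \<Rightarrow> bool) \<Rightarrow> clause" where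
  "clause_on V h = (\<lambda>x. (x, h x)) ` V"

lemma fst_clause_on: "fst ` clause_on V h = V"
  by (force simp: clause_on_def image_image)

lemma clause_on_eq_iff: "clause_on V h = clause_on W g \<longleftrightarrow> V = W \<and> (\<forall>x\<in>V. h x = g x)"
proof
  assume eq: "clause_on V h = clause_on W g"
  hence "V = W" by (metis fst_clause_on)
  moreover have "h x = g x" if "x \<in> V" for x
  proof -
    have "(x, h x) \<in> clause_on V h" using that by (simp add: clause_on_def)
    hence "(x, h x) \<in> clause_on W g" by (simp only: eq)
    thus ?thesis by (auto simp: clause_on_def)
  qed
  ultimately show "V = W \<and> (\<forall>x\<in>V. h x = g x)" by blast
next
  assume "V = W \<and> (\<forall>x\<in>V. h x = g x)"
  thus "clause_on V h = clause_on W g" unfolding clause_on_def by (auto intro!: image_cong)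
qed

lemma clause_sat_clause_on: "clause_sat \<alpha> (clause_on V h) \<longleftrightarrow> (\<exists>x\<in>V. \<alpha> x = h x)"
  by (auto simp: clause_sat_def lit_sat_def clause_on_def)

lemma clause_sat_restrict:
  assumes "C \<subseteq> {..<n} \<times> UNIV"
  shows "clause_sat (restrict \<alpha> {..<n}) C \<longleftrightarrow> clause_sat \<alpha> C"
  using assms by (force simp: clause_sat_def lit_sat_def)

lemma clause_on_in_dclauses:
  assumes "V \<subseteq> {..<n}" "card V = d"
  shows "clause_on V h \<in> dclauses n d"
proof -
  have "inj_on (\<lambda>x. (x, h x)) V" by (auto intro: inj_onI)
  thus ?thesis using assms by (auto simp: dclauses_def clause_on_def card_image intro: inj_onI)
qed

lemma dclause_eq_clause_on:
  assumes "C \<in> dclauses n d"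
  shows "C = clause_on (fst ` C) (\<lambda>x. (x, True) \<in> C)"
proof -
  have inj: "inj_on fst C" using assms by (simp add: dclauses_def)
  have polarity: "b = ((x, True) \<in> C)" if "(x, b) \<in> C" for x b
    using that inj_onD[OF inj, of "(x, b)" "(x, True)"] by (cases b) auto
  have "(x, b) \<in> C \<longleftrightarrow> (x, b) \<in> clause_on (fst ` C) (\<lambda>x. (x, True) \<in> C)" for x b
  proof
    assume xb: "(x, b) \<in> C"
    hence "x \<in> fst ` C" by (metis fst_conv image_eqI)
    thus "(x, b) \<in> clause_on (fst ` C) (\<lambda>x. (x, True) \<in> C)"
      using polarity[OF xb] by (simp add: clause_on_def)
  next
    assume "(x, b) \<in> clause_on (fst ` C) (\<lambda>x. (x, True) \<in> C)"
    then obtain b' where "(x, b') \<in> C" "b = ((x, True) \<in> C)" by (auto simp: clause_on_def)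
    thus "(x, b) \<in> C" using polarity by metis
  qed
  thus ?thesis by (metis set_eqI prod.collapse)
qed

lemma dclauses_eq_image:
  "dclauses n d = (\<lambda>(V, h). clause_on V h) ` (SIGMA V:{V. V \<subseteq> {..<n} \<and> card V = d}. V \<rightarrow>\<^sub>E UNIV)"
  (is "_ = ?g ` ?A")
proof
  show "?g ` ?A \<subseteq> dclauses n d" by (auto intro: clause_on_in_dclauses)
next
  show "dclauses n d \<subseteq> ?g ` ?A"
  proof
    fix C assume C: "C \<in> dclauses n d"
    let ?V = "fst ` C" and ?h = "\<lambda>x. (x, True) \<in> C"
    have "?V \<subseteq> {..<n}" "card ?V = d" using C by (auto simp: dclauses_def card_image)
    moreover have "C = clause_on ?V (restrict ?h ?V)"
      using dclause_eq_clause_on[OF C] clause_on_eq_iff[of ?V ?h ?V "restrict ?h ?V"] by simp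
    ultimately show "C \<in> ?g ` ?A" by (intro image_eqI[where x = "(?V, restrict ?h ?V)"]) auto
  qed
qed

lemma finite_dclauses: "finite (dclauses n d)"
  by (rule finite_subset[of _ "Pow ({..<n} \<times> UNIV)"]) (auto simp: dclauses_def)

lemma card_dclauses: "card (dclauses n d) = (n choose d) * 2 ^ d"
proof -
  let ?Vs = "{V. V \<subseteq> {..<n} \<and> card V = d}"
  let ?A = "SIGMA V:?Vs. V \<rightarrow>\<^sub>E (UNIV :: bool set)"
  have fin: "finite V" if "V \<in> ?Vs" for V using that finite_subset by blast
  have "inj_on (\<lambda>(V, h). clause_on V h) ?A"
  proof (rule inj_onI, clarify)
    fix V h W g
    assume h: "h \<in> V \<rightarrow>\<^sub>E UNIV" and g: "g \<in> W \<rightarrow>\<^sub>E UNIV" and "clause_on V h = clause_on W g"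
    hence "V = W" "\<forall>x\<in>V. h x = g x" by (simp_all add: clause_on_eq_iff)
    with h g show "V = W \<and> h = g" by (auto intro: PiE_ext)
  qed
  hence "card (dclauses n d) = card ?A" by (simp add: dclauses_eq_image card_image)
  also have "\<dots> = (\<Sum>V\<in>?Vs. 2 ^ d)"
    using fin by (subst card_SigmaI) (auto intro!: sum.cong simp: card_PiE finite_PiE)
  also have "\<dots> = (n choose d) * 2 ^ d" by (simp add: n_subsets)
  finally show ?thesis .
qed

lemma dclauses_nonempty: "d \<le> n \<Longrightarrow> dclauses n d \<noteq> {}"
  using card_dclauses[of n d] by (auto simp: zero_less_binomial)

lemma card_dclauses_falsified: "card {C \<in> dclauses n d. \<not> clause_sat \<alpha> C} = n choose d"
proof -
  let ?Vs = "{V. V \<subseteq> {..<n} \<and> card V = d}"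
  let ?falsified = "\<lambda>V. clause_on V (Not \<circ> \<alpha>)"
  have "{C \<in> dclauses n d. \<not> clause_sat \<alpha> C} = ?falsified ` ?Vs"
  proof
    show "?falsified ` ?Vs \<subseteq> {C \<in> dclauses n d. \<not> clause_sat \<alpha> C}"
      by (auto intro: clause_on_in_dclauses simp: clause_sat_clause_on)
  next
    show "{C \<in> dclauses n d. \<not> clause_sat \<alpha> C} \<subseteq> ?falsified ` ?Vs"
    proof clarify
      fix C assume "C \<in> dclauses n d" and unsat: "\<not> clause_sat \<alpha> C"
      then obtain V h where V: "V \<in> ?Vs" and C: "C = clause_on V h"
        by (auto simp: dclauses_eq_image)
      have "C = ?falsified V"
        using unsat by (auto simp: C clause_on_eq_iff clause_sat_clause_on)
      with V show "C \<in> ?falsified ` ?Vs" by blast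
    qed
  qed
  moreover have "inj_on ?falsified ?Vs"
  proof (rule inj_onI)
    fix V W assume "?falsified V = ?falsified W"
    hence "fst ` ?falsified V = fst ` ?falsified W" by (rule arg_cong)
    thus "V = W" by (simp only: fst_clause_on)
  qed
  ultimately show ?thesis by (simp add: card_image n_subsets)
qed

lemma card_dclause_pairs_sat:
  "real (card {(C1, C2) \<in> dclauses n d \<times> dclauses n d. clause_sat \<alpha> C1 \<or> clause_sat \<beta> C2})
     = (1 - 1 / 4 ^ d) * real (card (dclauses n d)) ^ 2"
proof -
  define D where "D = dclauses n d"
  define K where "K = {(C1, C2) \<in> D \<times> D. clause_sat \<alpha> C1 \<or> clause_sat \<beta> C2}"
  define Fa where "Fa = {C \<in> D. \<not> clause_sat \<alpha> C}"
  define Fb where "Fb = {C \<in> D. \<not> clause_sat \<beta> C}"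
  have "D \<times> D = K \<union> Fa \<times> Fb" "K \<inter> Fa \<times> Fb = {}"
    by (auto simp: K_def Fa_def Fb_def)
  moreover have "finite K" "finite (Fa \<times> Fb)"
    using finite_dclauses[of n d]
    by (auto simp: D_def K_def Fa_def Fb_def intro: finite_subset[of _ "D \<times> D"])
  ultimately have "card (D \<times> D) = card K + card (Fa \<times> Fb)"
    by (metis card_Un_disjoint)
  hence "card D * card D = card K + (n choose d) * (n choose d)"
    by (simp add: card_cartesian_product Fa_def Fb_def D_def card_dclauses_falsified)
  hence total: "real (card D) ^ 2 = real (card K) + real (n choose d) ^ 2"
    unfolding power2_eq_square by (metis of_nat_add of_nat_mult)
  have "real (card D) ^ 2 = real (n choose d) ^ 2 * 4 ^ d"
  proof -
    have "(2::real) ^ d * 2 ^ d = 4 ^ d" by (simp flip: power_mult_distrib)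
    thus ?thesis by (simp add: D_def card_dclauses power2_eq_square mult_ac)
  qed
  hence "(1 - 1 / 4 ^ d) * real (card D) ^ 2 = real (card D) ^ 2 - real (n choose d) ^ 2"
    by (simp add: field_simps)
  thus ?thesis using total by (simp add: K_def D_def)
qed

lemma F_prod_dist_eq_pmf_of_set:
  assumes "d \<le> n"
  shows "F_prod_dist m n d
           = pmf_of_set (({..<m} \<rightarrow>\<^sub>E dclauses n d) \<times> ({..<m} \<rightarrow>\<^sub>E dclauses n d))"
  using finite_dclauses dclauses_nonempty[OF assms]
  by (simp add: F_prod_dist_def F_dist_def pair_pmf_of_set finite_PiE PiE_eq_empty_iff)

lemma prob_pair_satisfies:
  assumes "d \<le> n"
  shows "measure_pmf.prob (F_prod_dist m n d)
           {(F1, F2). \<forall>i<m. clause_sat \<alpha> (F1 i) \<or> clause_sat \<beta> (F2 i)} = (1 - 1 / 4 ^ d) ^ m"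
proof -
  define D where "D = dclauses n d"
  define S where "S = {..<m} \<rightarrow>\<^sub>E D"
  let ?E = "{(F1, F2). \<forall>i<m. clause_sat \<alpha> (F1 i) \<or> clause_sat \<beta> (F2 i)}"
  have finD: "finite D" and D_pos: "card D > 0"
    using finite_dclauses dclauses_nonempty[OF assms] by (auto simp: D_def card_gt_0_iff)
  have "S \<times> S \<inter> ?E
          = {(F1, F2) \<in> S \<times> S. \<forall>i\<in>{..<m}. clause_sat \<alpha> (F1 i) \<or> clause_sat \<beta> (F2 i)}"
    by auto
  hence "card (S \<times> S \<inter> ?E)
           = card {(C1, C2) \<in> D \<times> D. clause_sat \<alpha> C1 \<or> clause_sat \<beta> C2} ^ m"
    using card_PiE_pairs_pointwise[of "{..<m}" D D "\<lambda>C1 C2. clause_sat \<alpha> C1 \<or> clause_sat \<beta> C2"]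
    by (simp add: S_def)
  hence "real (card (S \<times> S \<inter> ?E)) = ((1 - 1 / 4 ^ d) * real (card D) ^ 2) ^ m"
    using card_dclause_pairs_sat[of n d \<alpha> \<beta>] by (simp add: D_def)
  moreover have "real (card (S \<times> S)) = (real (card D) ^ 2) ^ m"
    using finD by (simp add: S_def card_cartesian_product card_PiE power2_eq_square power_mult_distrib)
  moreover have "finite S" "S \<noteq> {}"
    using finD D_pos by (auto simp: S_def finite_PiE PiE_eq_empty_iff)
  ultimately show ?thesis
    using D_pos assms
    by (simp add: F_prod_dist_eq_pmf_of_set measure_pmf_of_set power_mult_distrib flip: S_def D_def)
qed

lemma prob_prod_sat_le:
  assumes "d \<le> n"
  shows "prob_prod_sat m n d \<le> 4 ^ n * (1 - 1 / 4 ^ d) ^ m"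
proof -
  let ?P = "measure_pmf.prob (F_prod_dist m n d)"
  let ?A = "{..<n} \<rightarrow>\<^sub>E (UNIV :: bool set)"
  let ?E = "\<lambda>\<alpha> \<beta>. {(F1, F2). \<forall>i<m. clause_sat \<alpha> (F1 i) \<or> clause_sat \<beta> (F2 i)}"
  \<comment> \<open>Only the values on the n variables matter, so the union runs over the 4^n restricted pairs.\<close>
  have "{(F1, F2). prod_sat m F1 F2} \<inter> set_pmf (F_prod_dist m n d) \<subseteq> (\<Union>\<alpha>\<in>?A. \<Union>\<beta>\<in>?A. ?E \<alpha> \<beta>)"
  proof
    fix p assume "p \<in> {(F1, F2). prod_sat m F1 F2} \<inter> set_pmf (F_prod_dist m n d)"
    then obtain F1 F2 \<alpha> \<beta> where p: "p = (F1, F2)"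
      and sat: "\<forall>i<m. clause_sat \<alpha> (F1 i) \<or> clause_sat \<beta> (F2 i)"
      and supp: "(F1, F2) \<in> set_pmf (F_prod_dist m n d)"
      by (auto simp: prod_sat_def)
    have "F1 i \<subseteq> {..<n} \<times> UNIV \<and> F2 i \<subseteq> {..<n} \<times> UNIV" if "i < m" for i
      using that supp finite_dclauses dclauses_nonempty[OF assms]
      by (auto simp: F_prod_dist_def F_dist_def finite_PiE PiE_eq_empty_iff dclauses_def)
    with sat have E: "p \<in> ?E (restrict \<alpha> {..<n}) (restrict \<beta> {..<n})"
      by (simp add: p clause_sat_restrict)
    show "p \<in> (\<Union>\<alpha>\<in>?A. \<Union>\<beta>\<in>?A. ?E \<alpha> \<beta>)"
      by (rule UN_I[of "restrict \<alpha> {..<n}"], simp, rule UN_I[of "restrict \<beta> {..<n}"], simp, rule E)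
  qed
  hence "prob_prod_sat m n d \<le> ?P (\<Union>\<alpha>\<in>?A. \<Union>\<beta>\<in>?A. ?E \<alpha> \<beta>)"
    unfolding prob_prod_sat_def prod_sat_def
    by (metis (no_types, lifting) measure_Int_set_pmf measure_pmf.finite_measure_mono sets_measure_pmf UNIV_I)
  also have "\<dots> \<le> (\<Sum>\<alpha>\<in>?A. \<Sum>\<beta>\<in>?A. ?P (?E \<alpha> \<beta>))"
    by (intro order.trans[OF measure_pmf.finite_measure_subadditive_finite] sum_mono
              measure_pmf.finite_measure_subadditive_finite) (auto simp: finite_PiE)
  also have "\<dots> = 4 ^ n * (1 - 1 / 4 ^ d) ^ m"
    by (simp add: prob_pair_satisfies[OF assms] card_PiE power_mult_distrib[symmetric])
  finally show ?thesis .
qed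

theorem mainTheorem4:
  fixes c :: real and d m :: "nat \<Rightarrow> nat"
  assumes "c > 2 / log 2 (exp 1)"
    and "\<forall>n\<ge>1. 1 \<le> d n \<and> d n \<le> n"
    and "\<forall>n\<ge>1. real (m n) \<ge> c * real n * 2 ^ (2 * d n)"
  shows "(\<lambda>n. prob_prod_sat (m n) n (d n)) \<longlonglongrightarrow> 0"
proof -
  have "2 / log 2 (exp 1) = ln 4"
    using ln_realpow[of 2 2] by (simp add: log_def)
  hence "4 * exp (- c) < 1"
    using assms(1) by (simp add: exp_minus field_simps flip: exp_less_cancel_iff[of "ln 4"])
  hence geometric: "(\<lambda>n. (4 * exp (- c)) ^ n) \<longlonglongrightarrow> 0" by (intro LIMSEQ_power_zero) simp
  have bound: "norm (prob_prod_sat (m n) n (d n)) \<le> (4 * exp (- c)) ^ n" if "n \<ge> 1" for n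
  proof -
    have "(2::real) ^ (2 * d n) = 4 ^ d n" by (simp add: power_mult)
    hence m: "c * real n \<le> real (m n) * (1 / 4 ^ d n)"
      using assms(3)[rule_format, OF that] by (simp add: field_simps)
    have "prob_prod_sat (m n) n (d n) \<le> 4 ^ n * (1 - 1 / 4 ^ d n) ^ m n"
      using assms(2) that by (intro prob_prod_sat_le) simp
    also have "\<dots> \<le> 4 ^ n * exp (- (c * real n))"
      using one_minus_power_le_exp[of "1 / 4 ^ d n" "m n"] m by (simp add: order_trans)
    also have "\<dots> = (4 * exp (- c)) ^ n"
      by (simp add: power_mult_distrib flip: exp_of_nat_mult)
    finally show ?thesis by (simp add: prob_prod_sat_def)
  qed
  hence "\<forall>\<^sub>F n in sequentially. norm (prob_prod_sat (m n) n (d n)) \<le> (4 * exp (- c)) ^ n"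
    unfolding eventually_sequentially by blast
  thus ?thesis using geometric by (rule Lim_null_comparison)
qed

end
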